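(* Let $\mu>0$ and fix $s\in\mathcal{S}$. Suppose the quasi-optimal action-value function is concavely quadratic in the action: $Q^{*}_{\mu}(s,a)=-\alpha_1 a^2+\alpha_2 a+\alpha_3$ for all $a\in\mathbb{R}$, with constants (depending on $s$) $\alpha_1>0$, $\alpha_2,\alpha_3\in\mathbb{R}$. Let $\pi^{*}_{\mu}(\cdot\mid s)$ be the induced policy, i.e. a probability density on $\mathbb{R}$ whose support $\mathcal{W}_s$ (closure of $\{a:\pi^{*}_{\mu}(a\mid s)>0\}$) satisfies $0<\sigma(\mathcal{W}_s)<\infty$ and such that for all $a\in\mathbb{R}$ $$\pi^{*}_{\mu}(a\mid s)=\Big(\frac{Q^{*}_{\mu}(s,a)}{2\mu}-\frac{\int_{\mathcal{W}_s}Q^{*}_{\mu}(s,a')\,da'}{2\mu\,\sigma(\mathcal{W}_s)}+\frac{1}{\sigma(\mathcal{W}_s)}\Big)^{+}.$$ Then $\pi^{*}_{\mu}(\cdot\mid s)$ is a $q$-Gaussian density $$\pi^{*}_{\mu}(a\mid s)=\Big(\frac{3}{2}\Big(\frac{\alpha_1}{12\mu}\Big)^{1/3}-\frac{\alpha_1}{2\mu}\Big(a-\frac{\alpha_2}{2\alpha_1}\Big)^2\Big)^{+},$$ with support $$\mathcal{W}_s=\Big[\frac{\alpha_2-(12\alpha_1^2\mu)^{1/3}}{2\alpha_1},\ \frac{\alpha_2+(12\alpha_1^2\mu)^{1/3}}{2\alpha_1}\Big].$$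
   Context: $\sigma$ denotes Lebesgue measure on $\mathbb{R}$ and $x^{+}=\max(x,0)$. The action space is $\mathcal{A}=\mathbb{R}$. $Q^{*}_{\mu}$ is the quasi-optimal action-value function of a Markov decision process, here assumed to have the stated quadratic form at the state $s$. *)

theory Defs
  imports "HOL-Analysis.Analysis"
begin

end

theory Submission
  imports Defs
begin

text \<open>Completing the square turns the fixed-point equation into
  \<open>\<pi> a = (c - k (a - m)\<^sup>2)\<^sup>+\<close> with \<open>k = \<alpha>1 / (2 \<mu>)\<close>, \<open>m = \<alpha>2 / (2 \<alpha>1)\<close> and a level \<open>c\<close>
  that hides the unknown integral over \<open>W\<close>. Normalisation forces \<open>c > 0\<close>; writing
  \<open>c = k r\<^sup>2\<close>, the density is supported on \<open>[m - r, m + r]\<close> with total mass \<open>4 k r\<^sup>3 / 3\<close>,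
  so \<open>r\<^sup>3 = 3 \<mu> / (2 \<alpha>1)\<close>, which determines both \<open>r\<close> and \<open>c\<close> by cube roots.\<close>

lemma concave_quadratic_vertex_form:
  fixes \<alpha> \<beta> \<gamma> a :: real
  assumes "\<alpha> \<noteq> 0"
  shows "- \<alpha> * a\<^sup>2 + \<beta> * a + \<gamma> = (\<beta>\<^sup>2 / (4 * \<alpha>) + \<gamma>) - \<alpha> * (a - \<beta> / (2 * \<alpha>))\<^sup>2"
  using assms by (simp add: field_simps power2_eq_square)

lemma truncated_parabola_eq_0_if_level_nonpos:
  fixes k c m a :: real
  assumes "k \<ge> 0" "c \<le> 0"
  shows "max 0 (c - k * (a - m)\<^sup>2) = 0"
proof -
  have "k * (a - m)\<^sup>2 \<ge> 0" using assms(1) by simp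
  then show ?thesis using assms(2) by (simp add: max_absorb1)
qed

lemma truncated_parabola_pos_iff:
  fixes k r m a :: real
  assumes "k > 0" "r > 0"
  shows "max 0 (k * r\<^sup>2 - k * (a - m)\<^sup>2) > 0 \<longleftrightarrow> a \<in> {m - r <..< m + r}"
proof -
  have "max 0 (k * r\<^sup>2 - k * (a - m)\<^sup>2) > 0 \<longleftrightarrow> k * (a - m)\<^sup>2 < k * r\<^sup>2"
    by (simp add: less_max_iff_disj)
  also have "\<dots> \<longleftrightarrow> (a - m)\<^sup>2 < r\<^sup>2"
    using assms(1) by simp
  also have "\<dots> \<longleftrightarrow> \<bar>a - m\<bar> < r"
    using assms(2) by (metis abs_le_square_iff abs_of_pos not_le)
  finally show ?thesis by auto
qed

lemma closure_truncated_parabola_support: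
  fixes k r m :: real
  assumes "k > 0" "r > 0"
  shows "closure {a. max 0 (k * r\<^sup>2 - k * (a - m)\<^sup>2) > 0} = {m - r .. m + r}"
proof -
  have "{a. max 0 (k * r\<^sup>2 - k * (a - m)\<^sup>2) > 0} = {m - r <..< m + r}"
    using truncated_parabola_pos_iff[OF assms] by blast
  then show ?thesis using assms(2) by simp
qed

lemma truncated_parabola_has_integral:
  fixes k r m :: real
  assumes "k > 0" "r > 0"
  shows "((\<lambda>a. max 0 (k * r\<^sup>2 - k * (a - m)\<^sup>2)) has_integral 4 * k * r ^ 3 / 3) UNIV"
proof -
  define F where "F a = k * r\<^sup>2 * a - k * (a - m) ^ 3 / 3" for a
  have "((\<lambda>a. k * r\<^sup>2 - k * (a - m)\<^sup>2) has_integral F (m + r) - F (m - r)) {m - r .. m + r}"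
  proof (rule fundamental_theorem_of_calculus)
    fix x
    show "(F has_vector_derivative k * r\<^sup>2 - k * (x - m)\<^sup>2) (at x within {m - r .. m + r})"
      unfolding F_def has_real_derivative_iff_has_vector_derivative[symmetric]
      by (auto intro!: derivative_eq_intros simp: power2_eq_square)
  qed (use assms in simp)
  moreover have "F (m + r) - F (m - r) = 4 * k * r ^ 3 / 3"
    unfolding F_def by (simp add: algebra_simps power2_eq_square power3_eq_cube)
  ultimately have "((\<lambda>a. k * r\<^sup>2 - k * (a - m)\<^sup>2) has_integral 4 * k * r ^ 3 / 3) {m - r .. m + r}"
    by simp
  then have "((\<lambda>a. if a \<in> {m - r .. m + r} then k * r\<^sup>2 - k * (a - m)\<^sup>2 else 0)
      has_integral 4 * k * r ^ 3 / 3) UNIV"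
    by (subst has_integral_restrict_UNIV)
  moreover have "(if a \<in> {m - r .. m + r} then k * r\<^sup>2 - k * (a - m)\<^sup>2 else 0)
      = max 0 (k * r\<^sup>2 - k * (a - m)\<^sup>2)" for a
  proof -
    have "a \<in> {m - r .. m + r} \<longleftrightarrow> \<bar>a - m\<bar> \<le> r"
      by auto
    also have "\<dots> \<longleftrightarrow> k * (a - m)\<^sup>2 \<le> k * r\<^sup>2"
      using assms power2_le_iff_abs_le[of r "a - m"] by simp
    finally show ?thesis by (simp add: max_def)
  qed
  ultimately show ?thesis by simp
qed

lemma eq_powr_one_third_if_cube_eq:
  fixes x y :: real
  assumes "x \<ge> 0" "x ^ 3 = y"
  shows "x = y powr (1/3)"
proof -
  have "y \<ge> 0" using assms by auto
  have "x = root 3 y" using real_root_pos_unique[of 3 x y] assms by simp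
  also have "\<dots> = y powr (1/3)" using root_powr_inverse[of 3 y] \<open>y \<ge> 0\<close> by simp
  finally show ?thesis .
qed

lemma truncated_parabola_normalised:
  fixes \<alpha> \<mu> r :: real
  assumes "\<alpha> > 0" "\<mu> > 0" "r > 0" and mass: "4 * (\<alpha> / (2 * \<mu>)) * r ^ 3 / 3 = 1"
  shows "2 * \<alpha> * r = (12 * \<alpha>\<^sup>2 * \<mu>) powr (1/3)"
    and "\<alpha> / (2 * \<mu>) * r\<^sup>2 = 3 / 2 * (\<alpha> / (12 * \<mu>)) powr (1/3)"
proof -
  have r3: "r ^ 3 = 3 * \<mu> / (2 * \<alpha>)"
    using mass assms(1,2) by (simp add: field_simps)
  have "(2 * \<alpha> * r) ^ 3 = 12 * \<alpha>\<^sup>2 * \<mu>"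
    using r3 assms(1) by (simp add: power_mult_distrib field_simps power2_eq_square power3_eq_cube)
  then show "2 * \<alpha> * r = (12 * \<alpha>\<^sup>2 * \<mu>) powr (1/3)"
    using assms by (intro eq_powr_one_third_if_cube_eq) auto
  have "(2 / 3 * (\<alpha> / (2 * \<mu>) * r\<^sup>2)) ^ 3 = \<alpha> ^ 3 / (27 * \<mu> ^ 3) * (r ^ 3)\<^sup>2"
    by (simp add: power_mult_distrib power_divide field_simps flip: power_mult)
  also have "\<dots> = \<alpha> ^ 3 / (27 * \<mu> ^ 3) * (3 * \<mu> / (2 * \<alpha>))\<^sup>2"
    by (simp only: r3)
  also have "\<dots> = \<alpha> / (12 * \<mu>)"
    using assms(1,2) by (simp add: field_simps power2_eq_square power3_eq_cube)
  finally have "2 / 3 * (\<alpha> / (2 * \<mu>) * r\<^sup>2) = (\<alpha> / (12 * \<mu>)) powr (1/3)"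
    using assms by (intro eq_powr_one_third_if_cube_eq) auto
  then show "\<alpha> / (2 * \<mu>) * r\<^sup>2 = 3 / 2 * (\<alpha> / (12 * \<mu>)) powr (1/3)"
    by simp
qed

theorem theorem2:
  fixes \<mu> \<alpha>1 \<alpha>2 \<alpha>3 :: real
    and Q \<pi> :: "real \<Rightarrow> real"
    and W :: "real set"
  assumes mu_pos: "\<mu> > 0"
    and a1_pos: "\<alpha>1 > 0"
    and Q_quad: "\<And>a. Q a = - \<alpha>1 * a\<^sup>2 + \<alpha>2 * a + \<alpha>3"
    and pi_nonneg: "\<And>a. \<pi> a \<ge> 0"
    and pi_meas: "\<pi> \<in> borel_measurable lborel"
    and pi_int: "integrable lborel \<pi>"
    and pi_norm: "(\<integral>a. \<pi> a \<partial>lborel) = 1"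
    and W_def: "W = closure {a. \<pi> a > 0}"
    and W_pos: "emeasure lborel W > 0"
    and W_fin: "emeasure lborel W < \<infinity>"
    and fixpoint: "\<And>a. \<pi> a = max 0
        (Q a / (2 * \<mu>) - (LINT a':W|lborel. Q a') / (2 * \<mu> * measure lborel W)
         + 1 / measure lborel W)"
  shows "(\<forall>a. \<pi> a = max 0 (3 / 2 * (\<alpha>1 / (12 * \<mu>)) powr (1/3)
                 - \<alpha>1 / (2 * \<mu>) * (a - \<alpha>2 / (2 * \<alpha>1))\<^sup>2))
       \<and> W = {(\<alpha>2 - (12 * \<alpha>1\<^sup>2 * \<mu>) powr (1/3)) / (2 * \<alpha>1) ..
               (\<alpha>2 + (12 * \<alpha>1\<^sup>2 * \<mu>) powr (1/3)) / (2 * \<alpha>1)}"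
proof -
  define k where "k = \<alpha>1 / (2 * \<mu>)"
  define m where "m = \<alpha>2 / (2 * \<alpha>1)"
  define c where "c = (\<alpha>2\<^sup>2 / (4 * \<alpha>1) + \<alpha>3) / (2 * \<mu>)
      - (LINT a':W|lborel. Q a') / (2 * \<mu> * measure lborel W) + 1 / measure lborel W"
  have k_pos: "k > 0"
    using mu_pos a1_pos by (simp add: k_def)
  have pi_vertex: "\<pi> a = max 0 (c - k * (a - m)\<^sup>2)" for a
  proof -
    have "\<alpha>1 \<noteq> 0" using a1_pos by simp
    then have "Q a / (2 * \<mu>) = (\<alpha>2\<^sup>2 / (4 * \<alpha>1) + \<alpha>3) / (2 * \<mu>) - k * (a - m)\<^sup>2"
      unfolding Q_quad concave_quadratic_vertex_form[OF \<open>\<alpha>1 \<noteq> 0\<close>] k_def m_def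
      by (simp add: diff_divide_distrib)
    then show ?thesis using fixpoint[of a] by (simp add: c_def)
  qed
  have c_pos: "c > 0"
  proof (rule ccontr)
    assume "\<not> c > 0"
    then have "\<pi> = (\<lambda>_. 0)"
      using pi_vertex k_pos truncated_parabola_eq_0_if_level_nonpos by fastforce
    then show False using pi_norm by simp
  qed
  define r where "r = sqrt (c / k)"
  have r_pos: "r > 0" and kr2: "k * r\<^sup>2 = c"
    using c_pos k_pos by (simp_all add: r_def)
  have pi_parabola: "\<pi> = (\<lambda>a. max 0 (k * r\<^sup>2 - k * (a - m)\<^sup>2))"
    using pi_vertex kr2 by auto
  have "4 * k * r ^ 3 / 3 = 1"
    using truncated_parabola_has_integral[OF k_pos r_pos, of m] pi_norm integral_lborel[OF pi_int]
    unfolding pi_parabola[symmetric] by (simp add: has_integral_iff)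
  then have mass: "4 * (\<alpha>1 / (2 * \<mu>)) * r ^ 3 / 3 = 1"
    by (simp only: k_def)
  note radius = truncated_parabola_normalised(1)[OF a1_pos mu_pos r_pos mass]
    and level = truncated_parabola_normalised(2)[OF a1_pos mu_pos r_pos mass, folded k_def]
  have "W = {m - r .. m + r}"
    unfolding W_def pi_parabola using closure_truncated_parabola_support[OF k_pos r_pos] .
  moreover have "m - r = (\<alpha>2 - (12 * \<alpha>1\<^sup>2 * \<mu>) powr (1/3)) / (2 * \<alpha>1)"
    and "m + r = (\<alpha>2 + (12 * \<alpha>1\<^sup>2 * \<mu>) powr (1/3)) / (2 * \<alpha>1)"
    using a1_pos unfolding m_def radius[symmetric] by (simp_all add: field_simps)
  ultimately show ?thesis
    using pi_parabola[unfolded level] unfolding k_def m_def by simp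
qed

end
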